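(* Let $R$ be an inp-minimal integral domain. Then the set of prime ideals of $R$ is linearly ordered by inclusion. In particular, every proper radical ideal of $R$ is prime, and there exists $N\in\mathbb N$ such that for all $a,b\in R$, either $b^N\in aR$ or $a^N\in bR$.
   Context: Rings are commutative with identity. A ring is inp-minimal if its theory in the language of rings $(+,\cdot,0,1)$ has burden $1$ (no inp-pattern of depth $2$ in one variable). $aR$ denotes the principal ideal generated by $a$. *)

theory Defs
  imports Main
begin

datatype rtm = RVar nat | RZero | ROne | RAdd rtm rtm | RMul rtm rtm

datatype rfm = REq rtm rtm | RNot rfm | RAnd rfm rfm | REx nat rfm

primrec tval :: "(nat \<Rightarrow> 'a::comm_ring_1) \<Rightarrow> rtm \<Rightarrow> 'a" where
  "tval e (RVar v) = e v"
| "tval e RZero = 0"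
| "tval e ROne = 1"
| "tval e (RAdd s t) = tval e s + tval e t"
| "tval e (RMul s t) = tval e s * tval e t"

primrec fsat :: "(nat \<Rightarrow> 'a::comm_ring_1) \<Rightarrow> rfm \<Rightarrow> bool" where
  "fsat e (REq s t) = (tval e s = tval e t)"
| "fsat e (RNot f) = (\<not> fsat e f)"
| "fsat e (RAnd f g) = (fsat e f \<and> fsat e g)"
| "fsat e (REx v f) = (\<exists>c. fsat (e(v := c)) f)"

text \<open>A formula phi(x, y) is read with x = variable 0 and the parameter
  tuple y occupying variables 1, 2, ...; a parameter tuple is a function
  nat => 'a (only finitely many entries matter).\<close>
definition holds_at :: "rfm \<Rightarrow> 'a::comm_ring_1 \<Rightarrow> (nat \<Rightarrow> 'a) \<Rightarrow> bool" where
  "holds_at phi x a = fsat (\<lambda>v. case v of 0 \<Rightarrow> x | Suc i \<Rightarrow> a i) phi"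

text \<open>Finite approximations (of every length n) of an inp-pattern of depth 2
  in one variable, realised inside the ring itself. By compactness, an
  inp-pattern of depth 2 exists in a model of Th(R) iff all these finite
  approximations exist in R.\<close>
definition inp_pattern2 :: "'a::comm_ring_1 itself \<Rightarrow> rfm \<Rightarrow> rfm \<Rightarrow> nat \<Rightarrow> nat \<Rightarrow> bool" where
  "inp_pattern2 _ phi psi k1 k2 \<longleftrightarrow>
     (\<forall>n. \<exists>(a :: nat \<Rightarrow> nat \<Rightarrow> 'a) (b :: nat \<Rightarrow> nat \<Rightarrow> 'a).
        (\<forall>S. S \<subseteq> {..<n} \<and> card S = k1 \<longrightarrow> \<not> (\<exists>x. \<forall>i\<in>S. holds_at phi x (a i))) \<and>
        (\<forall>S. S \<subseteq> {..<n} \<and> card S = k2 \<longrightarrow> \<not> (\<exists>x. \<forall>j\<in>S. holds_at psi x (b j))) \<and>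
        (\<forall>i<n. \<forall>j<n. \<exists>x. holds_at phi x (a i) \<and> holds_at psi x (b j)))"

definition inp_minimal :: "'a::comm_ring_1 itself \<Rightarrow> bool" where
  "inp_minimal T \<longleftrightarrow> \<not> (\<exists>phi psi k1 k2. inp_pattern2 T phi psi k1 k2)"

definition is_ideal :: "'a::comm_ring_1 set \<Rightarrow> bool" where
  "is_ideal I \<longleftrightarrow> 0 \<in> I \<and> (\<forall>x\<in>I. \<forall>y\<in>I. x + y \<in> I) \<and> (\<forall>r. \<forall>x\<in>I. r * x \<in> I)"

definition prime_ideal :: "'a::comm_ring_1 set \<Rightarrow> bool" where
  "prime_ideal P \<longleftrightarrow> is_ideal P \<and> P \<noteq> UNIV \<and> (\<forall>a b. a * b \<in> P \<longrightarrow> a \<in> P \<or> b \<in> P)"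

definition radical_ideal :: "'a::comm_ring_1 set \<Rightarrow> bool" where
  "radical_ideal I \<longleftrightarrow> is_ideal I \<and> (\<forall>a (n::nat). a ^ n \<in> I \<longrightarrow> a \<in> I)"

definition principal_ideal :: "'a::comm_ring_1 \<Rightarrow> 'a set" where
  "principal_ideal a = {a * r | r. True}"

end

theory Submission
  imports Defs
begin

text \<open>If the integral domain has no uniform exponent N with a dvd b^N or b dvd a^N for all a, b,
  then for every n there are a, b with a not dividing b^n and b not dividing a^n. The formula
  "y0 dvd x and not y1 dvd x" with parameters (a^i, a^(i+1)) describes the elements whose exact
  a-adic order is i; distinct rows are 2-inconsistent, while a^i * b^j has exact a-order i and
  exact b-order j. This is an inp-pattern of depth 2, so inp-minimality yields the uniform N.
  With such an N, if a is in P but not in Q and b is in Q but not in P for primes P, Q, then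
  b^N lies in P or a^N lies in Q, a contradiction; similarly, a * b in a radical ideal I forces
  b^(N+1) or a^(N+1) into I.\<close>

definition dvd_not_dvd_fm :: rfm where
  "dvd_not_dvd_fm = RAnd (REx 3 (REq (RVar 0) (RMul (RVar 1) (RVar 3))))
                         (RNot (REx 3 (REq (RVar 0) (RMul (RVar 2) (RVar 3)))))"

lemma holds_at_dvd_not_dvd_fm:
  "holds_at dvd_not_dvd_fm (x::'a::comm_ring_1) p \<longleftrightarrow> p 0 dvd x \<and> \<not> p 1 dvd x"
  by (auto simp: dvd_not_dvd_fm_def holds_at_def dvd_def)

definition exact_power_params :: "'a::comm_ring_1 \<Rightarrow> nat \<Rightarrow> nat \<Rightarrow> 'a" where
  "exact_power_params c i = (\<lambda>k. if k = 0 then c ^ i else c ^ Suc i)"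

lemma holds_at_exact_power_params:
  "holds_at dvd_not_dvd_fm (x::'a::comm_ring_1) (exact_power_params c i)
     \<longleftrightarrow> c ^ i dvd x \<and> \<not> c ^ Suc i dvd x"
  by (simp add: holds_at_dvd_not_dvd_fm exact_power_params_def)

lemma exact_power_dvd_unique:
  fixes c x :: "'a::comm_semiring_1"
  assumes "c ^ i dvd x" "\<not> c ^ Suc i dvd x" "c ^ j dvd x" "\<not> c ^ Suc j dvd x"
  shows "i = j"
proof (rule ccontr)
  assume "i \<noteq> j"
  then consider "Suc i \<le> j" | "Suc j \<le> i" by linarith
  then show False
    by cases (use assms le_imp_power_dvd dvd_trans in blast)+
qed

lemma exact_power_params_inconsistent:
  fixes c :: "'a::comm_ring_1"
  assumes "card S = 2"
  shows "\<not> (\<exists>x. \<forall>i\<in>S. holds_at dvd_not_dvd_fm x (exact_power_params c i))"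
proof
  assume "\<exists>x. \<forall>i\<in>S. holds_at dvd_not_dvd_fm x (exact_power_params c i)"
  then obtain x where x: "\<And>i. i \<in> S \<Longrightarrow> c ^ i dvd x \<and> \<not> c ^ Suc i dvd x"
    by (auto simp: holds_at_exact_power_params)
  from assms obtain i j where "S = {i, j}" "i \<noteq> j"
    by (auto simp: card_2_iff)
  then show False
    using exact_power_dvd_unique x by blast
qed

lemma exact_power_dvd_power_mult:
  fixes a b :: "'a::idom"
  assumes "a \<noteq> 0" "\<not> a dvd b ^ j"
  shows "holds_at dvd_not_dvd_fm (a ^ i * b ^ j) (exact_power_params a i)"
  using assms by (simp add: holds_at_exact_power_params mult.commute[of a])

lemma inp_pattern2_of_not_power_dvd:
  assumes unbounded: "\<And>N. \<exists>a b :: 'a::idom. \<not> a dvd b ^ N \<and> \<not> b dvd a ^ N"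
  shows "inp_pattern2 TYPE('a) dvd_not_dvd_fm dvd_not_dvd_fm 2 2"
  unfolding inp_pattern2_def
proof
  fix n
  obtain a b :: 'a where ab: "\<not> a dvd b ^ n" "\<not> b dvd a ^ n"
    using unbounded by blast
  have mixed: "\<exists>x. holds_at dvd_not_dvd_fm x (exact_power_params a i)
                  \<and> holds_at dvd_not_dvd_fm x (exact_power_params b j)"
    if "i < n" "j < n" for i j
  proof -
    have "a \<noteq> 0" "b \<noteq> 0"
      using ab that by (auto simp: zero_power)
    moreover have "\<not> a dvd b ^ j" "\<not> b dvd a ^ i"
      using ab that le_imp_power_dvd[of j n b] le_imp_power_dvd[of i n a] dvd_trans
      by (meson less_imp_le)+
    ultimately show ?thesis
      using exact_power_dvd_power_mult[of a b j i] exact_power_dvd_power_mult[of b a i j]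
      by (metis mult.commute)
  qed
  show "\<exists>(p :: nat \<Rightarrow> nat \<Rightarrow> 'a) q.
          (\<forall>S. S \<subseteq> {..<n} \<and> card S = 2 \<longrightarrow> \<not> (\<exists>x. \<forall>i\<in>S. holds_at dvd_not_dvd_fm x (p i))) \<and>
          (\<forall>S. S \<subseteq> {..<n} \<and> card S = 2 \<longrightarrow> \<not> (\<exists>x. \<forall>j\<in>S. holds_at dvd_not_dvd_fm x (q j))) \<and>
          (\<forall>i<n. \<forall>j<n. \<exists>x. holds_at dvd_not_dvd_fm x (p i) \<and> holds_at dvd_not_dvd_fm x (q j))"
    using exact_power_params_inconsistent[of _ a] exact_power_params_inconsistent[of _ b] mixed
    by (intro exI[of _ "exact_power_params a"] exI[of _ "exact_power_params b"]) simp
qed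

lemma inp_minimal_imp_power_dvd:
  assumes "inp_minimal TYPE('a::idom)"
  shows "\<exists>N. \<forall>a b :: 'a. a dvd b ^ N \<or> b dvd a ^ N"
proof (rule ccontr)
  assume "\<not> ?thesis"
  then have "inp_pattern2 TYPE('a) dvd_not_dvd_fm dvd_not_dvd_fm 2 2"
    by (intro inp_pattern2_of_not_power_dvd) blast
  then show False
    using assms unfolding inp_minimal_def by blast
qed

lemma principal_ideal_iff_dvd: "x \<in> principal_ideal a \<longleftrightarrow> a dvd x"
  by (auto simp: principal_ideal_def dvd_def)

lemma ideal_dvd_mem:
  assumes "is_ideal J" "a \<in> J" "a dvd x"
  shows "x \<in> J"
  using assms by (auto simp: is_ideal_def dvd_def mult.commute)

lemma prime_ideal_power_mem:
  assumes "prime_ideal P" "b ^ n \<in> P"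
  shows "b \<in> P"
  using assms(2)
proof (induction n)
  case 0
  then have "r \<in> P" for r
    using assms(1) ideal_dvd_mem[of P 1 r] by (simp add: prime_ideal_def)
  then show ?case .
next
  case (Suc n)
  then show ?case
    using assms(1) by (auto simp: prime_ideal_def)
qed

lemma prime_ideals_linear_if_power_dvd:
  fixes P Q :: "'a::comm_ring_1 set"
  assumes N: "\<And>a b :: 'a. a dvd b ^ N \<or> b dvd a ^ N"
    and P: "prime_ideal P" and Q: "prime_ideal Q"
  shows "P \<subseteq> Q \<or> Q \<subseteq> P"
proof (rule ccontr)
  assume "\<not> ?thesis"
  then obtain a b where ab: "a \<in> P" "a \<notin> Q" "b \<in> Q" "b \<notin> P"
    by blast
  have "is_ideal P" "is_ideal Q"
    using P Q by (auto simp: prime_ideal_def)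
  then have "b ^ N \<in> P \<or> a ^ N \<in> Q"
    using N[of a b] ab ideal_dvd_mem by blast
  then show False
    using prime_ideal_power_mem P Q ab by blast
qed

lemma radical_ideal_prime_if_power_dvd:
  fixes I :: "'a::comm_ring_1 set"
  assumes N: "\<And>a b :: 'a. a dvd b ^ N \<or> b dvd a ^ N"
    and I: "radical_ideal I" "I \<noteq> UNIV"
  shows "prime_ideal I"
proof -
  have ideal: "is_ideal I"
    using I by (simp add: radical_ideal_def)
  have "a \<in> I \<or> b \<in> I" if ab: "a * b \<in> I" for a b
  proof -
    have "a * b dvd b ^ Suc N \<or> a * b dvd a ^ Suc N"
      using N[of a b] mult_dvd_mono[OF _ dvd_refl] by (metis mult.commute power_Suc2)
    then have "b ^ Suc N \<in> I \<or> a ^ Suc N \<in> I"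
      using ideal ab ideal_dvd_mem by blast
    then show ?thesis
      using I(1) unfolding radical_ideal_def by blast
  qed
  then show ?thesis
    using ideal I by (simp add: prime_ideal_def)
qed

theorem mainTheorem3:
  assumes "inp_minimal TYPE('a::idom)"
  shows "(\<forall>P Q :: 'a set. prime_ideal P \<and> prime_ideal Q \<longrightarrow> P \<subseteq> Q \<or> Q \<subseteq> P)
       \<and> (\<forall>I :: 'a set. radical_ideal I \<and> I \<noteq> UNIV \<longrightarrow> prime_ideal I)
       \<and> (\<exists>N::nat. \<forall>a b :: 'a. b ^ N \<in> principal_ideal a \<or> a ^ N \<in> principal_ideal b)"
proof -
  obtain N where N: "\<And>a b :: 'a. a dvd b ^ N \<or> b dvd a ^ N"
    using inp_minimal_imp_power_dvd[OF assms] by blast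
  show ?thesis
    using prime_ideals_linear_if_power_dvd[OF N] radical_ideal_prime_if_power_dvd[OF N] N
    by (auto simp: principal_ideal_iff_dvd)
qed

end
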